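(* The set of ramification points of the map $X:\mathbb P^1\to\mathbb P^1$, $X(z)=z/(\gamma G(S(z)))$, is the set $\mathcal L$ of zeros of $\phi$ if $LM=2$, and is $\mathcal L\cup\{\infty\}$ if $LM>2$.
   Context: Let $G(z)=1+\sum_{k=1}^Mg_kz^k$ with complex coefficients, $g_M\neq0$, let $S(z)=\sum_{k=1}^Lks_kz^k$ with complex $s_k$, $s_L\ne0$, $LM>1$, and $\gamma\in\mathbb C\setminus\{0\}$. Let $\phi(z)=G(S(z))-zG'(S(z))S'(z)$, a polynomial of degree $LM$, and $\mathcal L$ its zero set. A point $z_0\in\mathbb P^1$ is a ramification point of $X$ if $X$ is not invertible in any neighbourhood of $z_0$, i.e. either $X-X(z_0)$ vanishes to order $>1$ at $z_0$, or $X$ has a pole of order $\ge2$ at $z_0$. *)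

theory Defs
  imports "HOL-Complex_Analysis.Complex_Analysis"
begin

text \<open>Points of the Riemann sphere P^1 are represented as complex option:
  Some z is the finite point z, None is the point at infinity.\<close>

text \<open>Ramification of a (meromorphic) function at a finite point z0:
  either f has a pole of order at least 2 at z0, or f is not a pole at z0 and
  f - f(z0) vanishes to order > 1 at z0 (f(z0) taken as the limit value,
  which agrees with f z0 wherever f is continuous).\<close>
definition ramified_at :: "(complex \<Rightarrow> complex) \<Rightarrow> complex \<Rightarrow> bool" where
  "ramified_at f z0 \<longleftrightarrow>
     (is_pole f z0 \<and> zorder f z0 \<le> -2) \<or>
     (\<not> is_pole f z0 \<and> zorder (\<lambda>w. f w - Lim (at z0) f) z0 > 1)"

fun ramification_point :: "(complex \<Rightarrow> complex) \<Rightarrow> complex option \<Rightarrow> bool" where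
  "ramification_point f (Some z0) = ramified_at f z0"
| "ramification_point f None = ramified_at (\<lambda>w. f (1 / w)) 0"

end

theory Submission
  imports Defs "HOL-Computational_Algebra.Polynomial"
begin

text \<open>
  H = G \<circ> S is a polynomial of degree n = LM with H(0) = 1, so X(z) = z / (\<gamma> H(z)) and
  \<phi> = H - z H'. At a root z0 of H (so z0 \<noteq> 0) X has a pole of order ord_z0 H, which is at
  least 2 iff H'(z0) = 0, i.e. iff \<phi>(z0) = 0. At any other z0,
  X(w) - X(z0) = N(w) / (\<gamma> H(w) H(z0)) with N(w) = H(z0) w - z0 H(w), a polynomial vanishing
  at z0 with N'(z0) = \<phi>(z0). At infinity, X(1/w) = w^(n-1) / (\<gamma> R(w)) with R the
  reflected polynomial of H, R(0) \<noteq> 0, so X(1/w) vanishes to order n - 1 at 0, which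
  exceeds 1 iff n > 2.
\<close>

lemma poly_order_decomp:
  fixes p :: "'a::idom poly"
  assumes "p \<noteq> 0"
  obtains q where "poly q a \<noteq> 0" "\<And>x. poly p x = (x - a) ^ order a p * poly q x"
proof -
  obtain q where q: "p = [:- a, 1:] ^ order a p * q" "\<not> [:- a, 1:] dvd q"
    using order_decomp[OF assms] by blast
  show ?thesis
  proof
    show "poly q a \<noteq> 0" using q(2) poly_eq_0_iff_dvd by blast
    show "poly p x = (x - a) ^ order a p * poly q x" for x
      by (subst q(1)) (simp add: poly_power)
  qed
qed

lemma order_gt_1_iff_poly_pderiv:
  fixes p :: "'a::{idom,semiring_char_0} poly"
  assumes "p \<noteq> 0" "poly p a = 0"
  shows "1 < order a p \<longleftrightarrow> poly (pderiv p) a = 0"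
proof -
  have "degree p \<noteq> 0"
  proof
    assume "degree p = 0"
    then obtain c where "p = [:c:]" by (rule degree_eq_zeroE)
    with assms show False by simp
  qed
  then have "pderiv p \<noteq> 0"
    by (simp add: pderiv_eq_0_iff)
  then show ?thesis
    using order_pderiv[OF assms] order_root[of "pderiv p" a] by auto
qed

lemma sum_monom_poly:
  fixes c :: "nat \<Rightarrow> 'a::comm_ring_1"
  assumes "finite A" "n \<in> A" "\<And>k. k \<in> A \<Longrightarrow> k \<le> n" "c n \<noteq> 0"
  obtains p where "(\<lambda>x. \<Sum>k\<in>A. c k * x ^ k) = poly p" "degree p = n"
proof
  let ?p = "\<Sum>k\<in>A. monom (c k) k"
  show "(\<lambda>x. \<Sum>k\<in>A. c k * x ^ k) = poly ?p"
    by (simp add: fun_eq_iff poly_sum poly_monom)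
  have "coeff ?p n = c n"
    using assms(1,2) by (simp add: coeff_sum coeff_monom)
  moreover have "degree ?p \<le> n"
    using assms(1,3) by (intro degree_sum_le) (auto intro: order.trans[OF degree_monom_le])
  ultimately show "degree ?p = n"
    using assms(4) by (simp add: le_antisym le_degree)
qed

lemma zorder_poly_mult:
  fixes p :: "complex poly"
  assumes "p \<noteq> 0" "open S" "z0 \<in> S" "h holomorphic_on S" "h z0 \<noteq> 0"
    and "\<And>w. w \<in> S \<Longrightarrow> f w = poly p w * h w"
  shows "zorder f z0 = int (order z0 p)"
proof -
  obtain q where q: "poly q z0 \<noteq> 0" "\<And>w. poly p w = (w - z0) ^ order z0 p * poly q w"
    using poly_order_decomp[OF assms(1)] by blast
  show ?thesis
  proof (rule zorder_eqI[where S="S \<inter> {w. poly q w \<noteq> 0}" and g="\<lambda>w. poly q w * h w"])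
    show "open (S \<inter> {w. poly q w \<noteq> 0})"
      using assms(2) by (intro open_Int open_Collect_neq continuous_intros)
    show "(\<lambda>w. poly q w * h w) holomorphic_on S \<inter> {w. poly q w \<noteq> 0}"
      by (intro holomorphic_intros holomorphic_on_subset[OF assms(4)]) auto
  qed (use assms q in \<open>auto simp: power_int_of_nat\<close>)
qed

lemma
  fixes p :: "complex poly"
  assumes "p \<noteq> 0" "poly p z0 = 0" "open S" "z0 \<in> S" "h holomorphic_on S" "h z0 \<noteq> 0"
  shows is_pole_divide_poly: "is_pole (\<lambda>w. h w / poly p w) z0"
    and zorder_divide_poly: "zorder (\<lambda>w. h w / poly p w) z0 = - int (order z0 p)"
proof -
  obtain q where q: "poly q z0 \<noteq> 0" "\<And>w. poly p w = (w - z0) ^ order z0 p * poly q w"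
    using poly_order_decomp[OF assms(1)] by blast
  define T where "T = S \<inter> {w. poly q w \<noteq> 0}"
  have T: "open T" "z0 \<in> T" "(\<lambda>w. h w / poly q w) holomorphic_on T"
    using assms q unfolding T_def
    by (auto intro!: open_Int open_Collect_neq continuous_intros holomorphic_intros
             intro: holomorphic_on_subset[OF assms(5)])
  have eq: "(\<lambda>w. h w / poly p w) = (\<lambda>w. (h w / poly q w) / (w - z0) ^ order z0 p)"
    by (simp add: q(2) mult.commute)
  show "is_pole (\<lambda>w. h w / poly p w) z0"
    unfolding eq using T q(1) assms(1,2,6) order_root[of p z0]
    by (intro is_pole_basic[of _ T]) auto
  show "zorder (\<lambda>w. h w / poly p w) z0 = - int (order z0 p)"
    by (rule zorder_eqI[OF T]) (use q assms in \<open>auto simp: eq power_int_minus power_int_of_nat field_simps\<close>)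
qed

lemma ramified_at_holomorphic:
  assumes "open S" "z0 \<in> S" "f holomorphic_on S"
  shows "ramified_at f z0 \<longleftrightarrow> 1 < zorder (\<lambda>w. f w - f z0) z0"
proof -
  have "isCont f z0"
    using assms holomorphic_on_imp_continuous_on continuous_on_eq_continuous_at by blast
  then have "Lim (at z0) f = f z0"
    by (simp add: isCont_def tendsto_Lim)
  then show ?thesis
    using not_is_pole_holomorphic[OF assms] by (simp add: ramified_at_def)
qed

lemma ramified_at_z_div_poly_at_root:
  fixes H :: "complex poly"
  assumes "poly H 0 \<noteq> 0" "c \<noteq> 0" "poly H z0 = 0"
  shows "ramified_at (\<lambda>z. z / (c * poly H z)) z0 \<longleftrightarrow> poly (pderiv H) z0 = 0"
proof -
  have H: "H \<noteq> 0" using assms(1) by auto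
  have X: "(\<lambda>z. z / (c * poly H z)) = (\<lambda>z. (z / c) / poly H z)"
    by (simp add: field_simps)
  have h: "(\<lambda>z. z / c) holomorphic_on UNIV" "z0 / c \<noteq> 0"
    using assms by (auto intro!: holomorphic_intros)
  have "is_pole (\<lambda>z. z / (c * poly H z)) z0"
    "zorder (\<lambda>z. z / (c * poly H z)) z0 = - int (order z0 H)"
    unfolding X using is_pole_divide_poly[OF H assms(3) _ _ h] zorder_divide_poly[OF H assms(3) _ _ h]
    by auto
  then have "ramified_at (\<lambda>z. z / (c * poly H z)) z0 \<longleftrightarrow> 1 < order z0 H"
    by (auto simp: ramified_at_def)
  then show ?thesis
    using order_gt_1_iff_poly_pderiv[OF H assms(3)] by simp
qed

lemma ramified_at_z_div_poly_off_root:
  fixes H :: "complex poly"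
  assumes "poly H 0 \<noteq> 0" "c \<noteq> 0" "poly H z0 \<noteq> 0"
  shows "ramified_at (\<lambda>z. z / (c * poly H z)) z0 \<longleftrightarrow> poly H z0 = z0 * poly (pderiv H) z0"
proof -
  define A where "A = {w. poly H w \<noteq> 0}"
  have A: "open A" "z0 \<in> A"
    using assms(3) unfolding A_def by (auto intro!: open_Collect_neq continuous_intros)
  have hol: "(\<lambda>z. z / (c * poly H z)) holomorphic_on A"
    using assms(2) unfolding A_def by (auto intro!: holomorphic_intros)
  define N where "N = smult (poly H z0) [:0, 1:] - smult z0 H"
  have N: "N \<noteq> 0"
  proof
    assume "N = 0"
    moreover have "poly N 0 = - z0 * poly H 0" by (simp add: N_def)
    ultimately have "z0 = 0" using assms(1) by simp
    with \<open>N = 0\<close> assms(1) show False by (simp add: N_def)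
  qed
  have N_root: "poly N z0 = 0" by (simp add: N_def)
  have "zorder (\<lambda>w. w / (c * poly H w) - z0 / (c * poly H z0)) z0 = int (order z0 N)"
  proof (rule zorder_poly_mult[OF N A])
    show "(\<lambda>w. 1 / (c * poly H w * poly H z0)) holomorphic_on A"
      using assms(2,3) unfolding A_def by (auto intro!: holomorphic_intros)
  qed (use assms in \<open>auto simp: A_def N_def field_simps\<close>)
  then have "ramified_at (\<lambda>z. z / (c * poly H z)) z0 \<longleftrightarrow> 1 < order z0 N"
    using ramified_at_holomorphic[OF A hol] by simp
  also have "\<dots> \<longleftrightarrow> poly (pderiv N) z0 = 0"
    by (rule order_gt_1_iff_poly_pderiv[OF N N_root])
  also have "\<dots> \<longleftrightarrow> poly H z0 = z0 * poly (pderiv H) z0"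
    by (simp add: N_def pderiv_diff pderiv_smult pderiv_pCons)
  finally show ?thesis .
qed

lemma ramification_point_infinity_z_div_poly:
  fixes H :: "complex poly"
  assumes "c \<noteq> 0" "2 \<le> degree H"
  shows "ramification_point (\<lambda>z. z / (c * poly H z)) None \<longleftrightarrow> 2 < degree H"
proof -
  define R where "R = reflect_poly H"
  define k where "k = degree H - 1"
  have k: "degree H = Suc k" "k \<noteq> 0" using assms(2) by (auto simp: k_def)
  have R0: "poly R 0 \<noteq> 0" using assms(2) by (auto simp: R_def)
  have f: "(\<lambda>w. (1 / w) / (c * poly H (1 / w))) = (\<lambda>w. w ^ k / (c * poly R w))"
  proof
    fix w :: complex
    show "(1 / w) / (c * poly H (1 / w)) = w ^ k / (c * poly R w)"
    proof (cases "w = 0")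
      case False
      have "poly R w = w ^ k * w * poly H (1 / w)"
        using poly_reflect_poly_nz[OF False, of H] k(1)
        by (simp add: R_def inverse_eq_divide flip: power_Suc2)
      with False assms(1) show ?thesis by (simp add: field_simps)
    qed (use k in simp)
  qed
  define B where "B = {w. poly R w \<noteq> 0}"
  have B: "open B" "0 \<in> B"
    using R0 unfolding B_def by (auto intro!: open_Collect_neq continuous_intros)
  have hol: "(\<lambda>w. w ^ k / (c * poly R w)) holomorphic_on B"
    using assms(1) unfolding B_def by (auto intro!: holomorphic_intros)
  have "zorder (\<lambda>w. w ^ k / (c * poly R w) - 0 ^ k / (c * poly R 0)) 0 = int k"
  proof (rule zorder_eqI[OF B])
    show "(\<lambda>w. 1 / (c * poly R w)) holomorphic_on B"
      using assms(1) unfolding B_def by (auto intro!: holomorphic_intros)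
  qed (use assms R0 k in \<open>auto simp: power_int_of_nat\<close>)
  then have "ramified_at (\<lambda>w. w ^ k / (c * poly R w)) 0 \<longleftrightarrow> 1 < k"
    using ramified_at_holomorphic[OF B hol] by simp
  then show ?thesis
    using k(1) by (simp only: ramification_point.simps f) simp
qed

lemma ramified_at_z_div_poly:
  fixes H :: "complex poly"
  assumes "poly H 0 \<noteq> 0" "c \<noteq> 0"
  shows "ramified_at (\<lambda>z. z / (c * poly H z)) z0 \<longleftrightarrow> poly H z0 = z0 * poly (pderiv H) z0"
proof (cases "poly H z0 = 0")
  case True
  then have "z0 \<noteq> 0" using assms(1) by auto
  with True show ?thesis
    using ramified_at_z_div_poly_at_root[OF assms True] by simp
qed (use ramified_at_z_div_poly_off_root[OF assms] in simp)

theorem lemma7p7: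
  fixes g s :: "nat \<Rightarrow> complex" and M L :: nat and \<gamma> :: complex
    and G S X \<phi> :: "complex \<Rightarrow> complex"
  assumes "g M \<noteq> 0" and "s L \<noteq> 0" and "L * M > 1" and "\<gamma> \<noteq> 0"
  defines "G \<equiv> (\<lambda>w. 1 + (\<Sum>k=1..M. g k * w ^ k))"
      and "S \<equiv> (\<lambda>z. \<Sum>k=1..L. of_nat k * s k * z ^ k)"
      and "X \<equiv> (\<lambda>z. z / (\<gamma> * G (S z)))"
      and "\<phi> \<equiv> (\<lambda>z. G (S z) - z * deriv G (S z) * deriv S z)"
  shows "{p. ramification_point X p} =
           (if L * M = 2 then Some ` {z. \<phi> z = 0}
            else insert None (Some ` {z. \<phi> z = 0}))"
proof -
  have "1 \<le> M" "1 \<le> L" using assms(3) by (auto simp: Suc_le_eq intro!: Nat.gr0I)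
  obtain P where P: "(\<lambda>w. \<Sum>k=1..M. g k * w ^ k) = poly P" "degree P = M"
    by (rule sum_monom_poly[of "{1..M}" M g]) (use \<open>1 \<le> M\<close> assms(1) in auto)
  obtain Q where Q: "S = poly Q" "degree Q = L"
    unfolding S_def
    by (rule sum_monom_poly[of "{1..L}" L "\<lambda>k. of_nat k * s k"]) (use \<open>1 \<le> L\<close> assms(2) in auto)
  define H where "H = pcompose (1 + P) Q"
  have G: "G = poly (1 + P)"
    using P(1) by (simp add: G_def fun_eq_iff)
  have "degree (1 + P) = M"
    using P(2) \<open>1 \<le> M\<close> by (simp add: degree_add_eq_right)
  then have degH: "degree H = L * M"
    using Q(2) by (simp add: H_def degree_pcompose)
  have "poly Q 0 = 0"
    unfolding Q(1)[symmetric] S_def by simp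
  then have H0: "poly H 0 = 1"
    unfolding H_def poly_pcompose G[symmetric] by (simp add: G_def)
  have X: "X = (\<lambda>z. z / (\<gamma> * poly H z))"
    by (simp add: X_def G Q H_def poly_pcompose)
  have "deriv G (S z) * deriv S z = poly (pderiv H) z" for z
    by (simp add: G Q H_def pderiv_pcompose poly_pcompose DERIV_imp_deriv[OF poly_DERIV])
  then have \<phi>: "\<phi> z = 0 \<longleftrightarrow> poly H z = z * poly (pderiv H) z" for z
    by (simp add: \<phi>_def X_def G Q H_def poly_pcompose mult.assoc)
  have "ramification_point X None \<longleftrightarrow> L * M \<noteq> 2"
    using ramification_point_infinity_z_div_poly[of \<gamma> H] assms(3,4) degH X by auto
  then show ?thesis
    using ramified_at_z_div_poly[of H \<gamma>] assms(4) H0 X \<phi>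
    by (auto simp: image_iff elim: ramification_point.elims)
qed

end
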